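(* Let $G$ be a graph of order $n$, and let $H$ be a graph with $\Delta(H)\le n(H)-2$, where $n(H)=|V(H)|$. Then $$\gamma_{oidR}(G\odot H)=\min\{|V_0|(n(H)+\gamma(H))+|V_1|(\gamma_{oidR}(H)+1)+|V_2|(\gamma_{oiR}(H)+2)+|V_3|(\beta(H)+3)\},$$ where the minimum is taken over all functions $f_G:V(G)\to\{0,1,2,3\}$ for which $V_0=f_G^{-1}(0)$ is an independent set of $G$, and $V_i=f_G^{-1}(i)$.
   Context: The corona $G\odot H$ is obtained from $G$ with $V(G)=\{v_1,\dots,v_n\}$ and $n$ disjoint copies $H_1,\dots,H_n$ of $H$ by joining $v_i$ to every vertex of $H_i$ for each $i$. $\gamma(H)$ is the domination number and $\beta(H)$ the vertex cover number of $H$. A DRD function of a graph is $f:V\to\{0,1,2,3\}$ such that every vertex with value $0$ has a neighbor with value $3$ or two neighbors with value $2$, and every vertex with value $1$ has a neighbor with value at least $2$; it is an OIDRD function if the set of vertices with value $0$ is independent, and $\gamma_{oidR}$ is the minimum weight $\sum_v f(v)$ of an OIDRD function. A Roman dominating function is $f:V\to\{0,1,2\}$ such that every vertex with value $0$ has a neighbor with value $2$; it is an OIRD function if the set of vertices with value $0$ is independent, and $\gamma_{oiR}$ is the minimum weight of an OIRD function. *)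

theory Defs
  imports Main
begin

definition sgraph :: "'a set \<Rightarrow> 'a set set \<Rightarrow> bool" where
  "sgraph V E \<longleftrightarrow> finite V \<and> (\<forall>e\<in>E. \<exists>u v. u \<noteq> v \<and> u \<in> V \<and> v \<in> V \<and> e = {u, v})"

definition adj :: "'a set set \<Rightarrow> 'a \<Rightarrow> 'a \<Rightarrow> bool" where
  "adj E u v \<longleftrightarrow> u \<noteq> v \<and> {u, v} \<in> E"

definition degree :: "'a set \<Rightarrow> 'a set set \<Rightarrow> 'a \<Rightarrow> nat" where
  "degree V E v = card {u \<in> V. adj E v u}"

definition independent :: "'a set set \<Rightarrow> 'a set \<Rightarrow> bool" where
  "independent E S \<longleftrightarrow> (\<forall>u\<in>S. \<forall>v\<in>S. \<not> adj E u v)"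

definition dominating :: "'a set \<Rightarrow> 'a set set \<Rightarrow> 'a set \<Rightarrow> bool" where
  "dominating V E D \<longleftrightarrow> D \<subseteq> V \<and> (\<forall>v\<in>V - D. \<exists>u\<in>D. adj E u v)"

definition domination_number :: "'a set \<Rightarrow> 'a set set \<Rightarrow> nat" where
  "domination_number V E = Min (card ` {D. dominating V E D})"

definition vertex_cover :: "'a set \<Rightarrow> 'a set set \<Rightarrow> 'a set \<Rightarrow> bool" where
  "vertex_cover V E C \<longleftrightarrow> C \<subseteq> V \<and> (\<forall>e\<in>E. e \<inter> C \<noteq> {})"

definition vertex_cover_number :: "'a set \<Rightarrow> 'a set set \<Rightarrow> nat" where
  "vertex_cover_number V E = Min (card ` {C. vertex_cover V E C})"

definition weight :: "'a set \<Rightarrow> ('a \<Rightarrow> nat) \<Rightarrow> nat" where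
  "weight V f = (\<Sum>v\<in>V. f v)"

definition DRD :: "'a set \<Rightarrow> 'a set set \<Rightarrow> ('a \<Rightarrow> nat) \<Rightarrow> bool" where
  "DRD V E f \<longleftrightarrow> f ` V \<subseteq> {0, 1, 2, 3} \<and>
     (\<forall>v\<in>V. f v = 0 \<longrightarrow>
        (\<exists>u\<in>V. adj E v u \<and> f u = 3) \<or>
        (\<exists>u\<in>V. \<exists>w\<in>V. u \<noteq> w \<and> adj E v u \<and> adj E v w \<and> f u = 2 \<and> f w = 2)) \<and>
     (\<forall>v\<in>V. f v = 1 \<longrightarrow> (\<exists>u\<in>V. adj E v u \<and> f u \<ge> 2))"

definition OIDRD :: "'a set \<Rightarrow> 'a set set \<Rightarrow> ('a \<Rightarrow> nat) \<Rightarrow> bool" where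
  "OIDRD V E f \<longleftrightarrow> DRD V E f \<and> independent E {v \<in> V. f v = 0}"

definition gamma_oidR :: "'a set \<Rightarrow> 'a set set \<Rightarrow> nat" where
  "gamma_oidR V E = Min (weight V ` {f. OIDRD V E f})"

definition RD :: "'a set \<Rightarrow> 'a set set \<Rightarrow> ('a \<Rightarrow> nat) \<Rightarrow> bool" where
  "RD V E f \<longleftrightarrow> f ` V \<subseteq> {0, 1, 2} \<and>
     (\<forall>v\<in>V. f v = 0 \<longrightarrow> (\<exists>u\<in>V. adj E v u \<and> f u = 2))"

definition OIRD :: "'a set \<Rightarrow> 'a set set \<Rightarrow> ('a \<Rightarrow> nat) \<Rightarrow> bool" where
  "OIRD V E f \<longleftrightarrow> RD V E f \<and> independent E {v \<in> V. f v = 0}"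

definition gamma_oiR :: "'a set \<Rightarrow> 'a set set \<Rightarrow> nat" where
  "gamma_oiR V E = Min (weight V ` {f. OIRD V E f})"

text \<open>Corona G o H: vertices Inl v for v in V(G), and Inr (v, x) for the copy of x in H_v.\<close>

definition corona_V :: "'a set \<Rightarrow> 'b set \<Rightarrow> ('a + 'a \<times> 'b) set" where
  "corona_V VG VH = Inl ` VG \<union> Inr ` (VG \<times> VH)"

definition corona_E :: "'a set \<Rightarrow> 'a set set \<Rightarrow> 'b set \<Rightarrow> 'b set set \<Rightarrow> ('a + 'a \<times> 'b) set set" where
  "corona_E VG EG VH EH =
     (\<lambda>e. Inl ` e) ` EG
   \<union> {(\<lambda>x. Inr (v, x)) ` e | v e. v \<in> VG \<and> e \<in> EH}
   \<union> {{Inl v, Inr (v, x)} | v x. v \<in> VG \<and> x \<in> VH}"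

end

theory Submission
  imports Defs
begin

text \<open>An OIDRD function F of G \<odot> H is determined by the labels k = F v of the vertices of G together
  with the labellings g of their copies H_v, and since the copies only see their own centre,
  the conditions at H_v involve only k and g. For each k the cheapest admissible g is classical:
  for k = 0 no vertex of H_v may be labelled 0 and the vertices labelled 2 or 3 dominate those
  labelled 1, costing n(H) + \<gamma>(H); for k = 1 g is an OIDRD function of H; for k = 2 every 0 needs
  just one neighbour labelled at least 2, so capping g at 2 gives an OIRD function; for k = 3 only
  the independence of the zeros remains, and the non-zero vertices form a vertex cover. Conversely
  these optima can be chosen so that they also dominate their centre (for k = 0 because
  \<Delta>(H) \<le> n(H) - 2 forces \<gamma>(H) \<ge> 2), so every labelling of G with independent zeros extends.\<close>

lemma adj_commute: "adj E u v \<longleftrightarrow> adj E v u"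
  by (auto simp: adj_def insert_commute)

lemma vertex_cover_iff_independent_Diff:
  assumes "sgraph V E"
  shows "vertex_cover V E C \<longleftrightarrow> C \<subseteq> V \<and> independent E (V - C)"
proof -
  have "(\<forall>e\<in>E. e \<inter> C \<noteq> {}) \<longleftrightarrow> independent E (V - C)"
  proof
    assume cover: "\<forall>e\<in>E. e \<inter> C \<noteq> {}"
    show "independent E (V - C)"
      unfolding independent_def adj_def
    proof (intro ballI notI)
      fix u w assume "u \<in> V - C" "w \<in> V - C" "u \<noteq> w \<and> {u, w} \<in> E"
      then show False using cover[rule_format, of "{u, w}"] by auto
    qed
  next
    assume indep: "independent E (V - C)"
    show "\<forall>e\<in>E. e \<inter> C \<noteq> {}"
    proof
      fix e assume "e \<in> E"
      then obtain u v where "u \<noteq> v" "u \<in> V" "v \<in> V" "e = {u, v}"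
        using assms unfolding sgraph_def by blast
      then show "e \<inter> C \<noteq> {}"
        using indep \<open>e \<in> E\<close> unfolding independent_def adj_def by auto
    qed
  qed
  then show ?thesis by (simp only: vertex_cover_def)
qed

lemma card_nonzero_le_sum:
  fixes f :: "'a \<Rightarrow> nat"
  assumes "finite A"
  shows "card {x \<in> A. f x \<noteq> 0} \<le> sum f A"
proof -
  have "card {x \<in> A. f x \<noteq> 0} \<le> sum f {x \<in> A. f x \<noteq> 0}"
    using sum_bounded_below[of "{x \<in> A. f x \<noteq> 0}" 1 f] by simp
  also have "\<dots> \<le> sum f A"
    using assms by (intro sum_mono2) auto
  finally show ?thesis .
qed

lemma Min_image_attained:
  assumes "finite (\<phi> ` Collect P)" and "P x"
  shows "\<exists>y. P y \<and> \<phi> y = Min (\<phi> ` Collect P)"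
proof -
  have "Min (\<phi> ` Collect P) \<in> \<phi> ` Collect P"
    using assms by (intro Min_in) auto
  then show ?thesis by auto
qed

lemma finite_weight_image:
  assumes "finite V" and "\<And>f. P f \<Longrightarrow> f ` V \<subseteq> {0, 1, 2, 3}"
  shows "finite (weight V ` Collect P)"
proof (rule finite_subset)
  show "weight V ` Collect P \<subseteq> {..card V * 3}"
  proof clarsimp
    fix f assume "P f"
    then have "f ` V \<subseteq> {0, 1, 2, 3}" by (rule assms(2))
    then have "weight V f \<le> (\<Sum>v\<in>V. 3)"
      unfolding weight_def by (intro sum_mono) (auto simp: image_subset_iff)
    then show "weight V f \<le> card V * 3" by simp
  qed
qed simp

lemma finite_card_image:
  assumes "finite V" and "\<And>S. P S \<Longrightarrow> S \<subseteq> V"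
  shows "finite (card ` Collect P)"
proof -
  have "Collect P \<subseteq> Pow V" using assms(2) by auto
  then show ?thesis using assms(1) by (intro finite_imageI) (simp add: finite_subset)
qed

lemma finite_weight_image_OIDRD: "finite V \<Longrightarrow> finite (weight V ` {f. OIDRD V E f})"
  by (rule finite_weight_image) (auto simp: OIDRD_def DRD_def)

lemma finite_weight_image_OIRD: "finite V \<Longrightarrow> finite (weight V ` {f. OIRD V E f})"
  by (rule finite_weight_image) (auto simp: OIRD_def RD_def)

lemma finite_card_image_dominating: "finite V \<Longrightarrow> finite (card ` {D. dominating V E D})"
  by (rule finite_card_image) (auto simp: dominating_def)

lemma finite_card_image_vertex_cover: "finite V \<Longrightarrow> finite (card ` {C. vertex_cover V E C})"
  by (rule finite_card_image) (auto simp: vertex_cover_def)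

lemma OIDRD_const_2: "OIDRD V E (\<lambda>_. 2)"
  by (auto simp: OIDRD_def DRD_def independent_def)

lemma OIRD_const_1: "OIRD V E (\<lambda>_. 1)"
  by (auto simp: OIRD_def RD_def independent_def)

lemma gamma_oidR_le: "finite V \<Longrightarrow> OIDRD V E f \<Longrightarrow> gamma_oidR V E \<le> weight V f"
  unfolding gamma_oidR_def by (rule Min_le) (auto simp: finite_weight_image_OIDRD)

lemma gamma_oidR_attained:
  assumes "finite V"
  shows "\<exists>f. OIDRD V E f \<and> weight V f = gamma_oidR V E"
  unfolding gamma_oidR_def
  by (rule Min_image_attained, rule finite_weight_image_OIDRD[OF assms], rule OIDRD_const_2)

lemma gamma_oiR_le: "finite V \<Longrightarrow> OIRD V E f \<Longrightarrow> gamma_oiR V E \<le> weight V f"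
  unfolding gamma_oiR_def by (rule Min_le) (auto simp: finite_weight_image_OIRD)

lemma gamma_oiR_attained:
  assumes "finite V"
  shows "\<exists>f. OIRD V E f \<and> weight V f = gamma_oiR V E"
  unfolding gamma_oiR_def
  by (rule Min_image_attained, rule finite_weight_image_OIRD[OF assms], rule OIRD_const_1)

lemma domination_number_le: "finite V \<Longrightarrow> dominating V E D \<Longrightarrow> domination_number V E \<le> card D"
  unfolding domination_number_def by (rule Min_le) (auto simp: finite_card_image_dominating)

lemma domination_number_attained:
  assumes "finite V"
  shows "\<exists>D. dominating V E D \<and> card D = domination_number V E"
  unfolding domination_number_def
  by (rule Min_image_attained[where x = V], rule finite_card_image_dominating[OF assms])
    (simp add: dominating_def)

lemma vertex_cover_number_le: "finite V \<Longrightarrow> vertex_cover V E C \<Longrightarrow> vertex_cover_number V E \<le> card C"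
  unfolding vertex_cover_number_def by (rule Min_le) (auto simp: finite_card_image_vertex_cover)

lemma vertex_cover_number_attained:
  assumes "sgraph V E"
  shows "\<exists>C. vertex_cover V E C \<and> card C = vertex_cover_number V E"
  unfolding vertex_cover_number_def
proof (rule Min_image_attained)
  show "finite (card ` {C. vertex_cover V E C})" and "vertex_cover V E V"
    using assms finite_card_image_vertex_cover unfolding sgraph_def vertex_cover_def by blast+
qed

lemma OIDRD_D:
  assumes "OIDRD V E f" and "w \<in> V"
  shows "f w \<in> {0, 1, 2, 3}"
    and "f w = 0 \<Longrightarrow> (\<exists>u\<in>V. adj E w u \<and> f u = 3) \<or>
      (\<exists>u\<in>V. \<exists>u'\<in>V. u \<noteq> u' \<and> adj E w u \<and> adj E w u' \<and> f u = 2 \<and> f u' = 2)"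
    and "f w = 1 \<Longrightarrow> \<exists>u\<in>V. adj E w u \<and> 2 \<le> f u"
    and "w' \<in> V \<Longrightarrow> f w = 0 \<Longrightarrow> f w' = 0 \<Longrightarrow> \<not> adj E w w'"
  using assms unfolding OIDRD_def DRD_def independent_def by blast+

lemma OIDRD_ex_label_ge_2:
  assumes "OIDRD V E f" and "V \<noteq> {}"
  shows "\<exists>x\<in>V. 2 \<le> f x"
proof -
  obtain x where x: "x \<in> V" using assms(2) by blast
  consider "f x = 0" | "f x = 1" | "2 \<le> f x" by linarith
  then show ?thesis
  proof cases
    case 1
    then show ?thesis using OIDRD_D(2)[OF assms(1) x] by force
  next
    case 2
    then show ?thesis using OIDRD_D(3)[OF assms(1) x] by blast
  next
    case 3
    then show ?thesis using x by blast
  qed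
qed

lemma dominating_ex_two:
  assumes "finite V" and "V \<noteq> {}" and deg: "\<forall>x\<in>V. degree V E x + 2 \<le> card V"
    and D: "dominating V E D"
  shows "\<exists>a\<in>D. \<exists>b\<in>D. a \<noteq> b"
proof (rule ccontr)
  assume single: "\<not> (\<exists>a\<in>D. \<exists>b\<in>D. a \<noteq> b)"
  have "D \<noteq> {}" using assms(2) D unfolding dominating_def by blast
  then obtain a where a: "a \<in> D" by blast
  then have "a \<in> V" using D unfolding dominating_def by blast
  have "V - {a} \<subseteq> {u \<in> V. adj E a u}"
  proof
    fix u assume u: "u \<in> V - {a}"
    then have "u \<notin> D" using single a by blast
    then obtain d where "d \<in> D" "adj E d u" using D u unfolding dominating_def by blast
    moreover have "d = a" using single a \<open>d \<in> D\<close> by blast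
    ultimately show "u \<in> {u \<in> V. adj E a u}" using u by simp
  qed
  then have "card (V - {a}) \<le> degree V E a"
    unfolding degree_def using assms(1) by (intro card_mono) auto
  moreover have "card (V - {a}) = card V - 1" and "card V \<noteq> 0"
    using assms(1) \<open>a \<in> V\<close> by auto
  moreover have "degree V E a + 2 \<le> card V" using deg \<open>a \<in> V\<close> by blast
  ultimately show False by linarith
qed

lemma card_add_domination_number_le_sum:
  fixes g :: "'a \<Rightarrow> nat"
  assumes "finite V" and pos: "\<forall>x\<in>V. g x \<noteq> 0"
    and one: "\<forall>x\<in>V. g x = 1 \<longrightarrow> (\<exists>y\<in>V. adj E x y \<and> 2 \<le> g y)"
  shows "card V + domination_number V E \<le> sum g V"
proof -
  let ?D = "{x \<in> V. 2 \<le> g x}"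
  have "dominating V E ?D"
    unfolding dominating_def
  proof (intro conjI ballI)
    fix x assume x: "x \<in> V - ?D"
    with pos have "g x = 1" by auto
    with one x obtain y where "y \<in> V" "adj E x y" "2 \<le> g y" by auto
    then show "\<exists>u\<in>?D. adj E u x" by (auto simp: adj_commute)
  qed auto
  then have "domination_number V E \<le> card ?D"
    by (rule domination_number_le[OF assms(1)])
  also have "?D = {x \<in> V. g x - 1 \<noteq> 0}" by auto
  also have "card \<dots> \<le> (\<Sum>x\<in>V. g x - 1)"
    by (rule card_nonzero_le_sum[OF assms(1)])
  finally have "domination_number V E \<le> (\<Sum>x\<in>V. g x - 1)" .
  moreover have "sum g V = (\<Sum>x\<in>V. 1 + (g x - 1))"
    using pos by (intro sum.cong) auto
  then have "sum g V = card V + (\<Sum>x\<in>V. g x - 1)"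
    by (simp only: sum.distrib) simp
  ultimately show ?thesis by linarith
qed

lemma gamma_oiR_le_sum:
  fixes g :: "'a \<Rightarrow> nat"
  assumes "finite V" and indep: "independent E {x \<in> V. g x = 0}"
    and zero: "\<forall>x\<in>V. g x = 0 \<longrightarrow> (\<exists>y\<in>V. adj E x y \<and> 2 \<le> g y)"
  shows "gamma_oiR V E \<le> sum g V"
proof -
  let ?h = "\<lambda>x. min (g x) 2"
  have "OIRD V E ?h"
    unfolding OIRD_def RD_def
  proof (intro conjI ballI impI)
    show "?h ` V \<subseteq> {0, 1, 2}" by (auto simp: min_def)
    have "{x \<in> V. ?h x = 0} = {x \<in> V. g x = 0}" by auto
    then show "independent E {x \<in> V. ?h x = 0}" using indep by simp
    fix x assume "x \<in> V" "?h x = 0"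
    then obtain y where "y \<in> V" "adj E x y" "2 \<le> g y" using zero by auto
    then show "\<exists>u\<in>V. adj E x u \<and> ?h u = 2" by auto
  qed
  then have "gamma_oiR V E \<le> weight V ?h"
    by (rule gamma_oiR_le[OF assms(1)])
  also have "\<dots> \<le> sum g V"
    unfolding weight_def by (intro sum_mono) simp
  finally show ?thesis .
qed

lemma vertex_cover_number_le_sum:
  fixes g :: "'a \<Rightarrow> nat"
  assumes "sgraph V E" and "independent E {x \<in> V. g x = 0}"
  shows "vertex_cover_number V E \<le> sum g V"
proof -
  let ?C = "{x \<in> V. g x \<noteq> 0}"
  have "V - ?C = {x \<in> V. g x = 0}" by auto
  then have "vertex_cover V E ?C"
    using assms by (simp add: vertex_cover_iff_independent_Diff)
  then have "vertex_cover_number V E \<le> card ?C"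
    using assms(1) by (intro vertex_cover_number_le) (simp_all add: sgraph_def)
  also have "\<dots> \<le> sum g V"
    using assms(1) by (intro card_nonzero_le_sum) (simp add: sgraph_def)
  finally show ?thesis .
qed

section \<open>The corona\<close>

lemma corona_E_iff:
  "S \<in> corona_E VG EG VH EH \<longleftrightarrow>
     (\<exists>e\<in>EG. S = Inl ` e) \<or> (\<exists>v\<in>VG. \<exists>e\<in>EH. S = (\<lambda>x. Inr (v, x)) ` e) \<or>
     (\<exists>v\<in>VG. \<exists>x\<in>VH. S = {Inl v, Inr (v, x)})"
  unfolding corona_E_def by blast

lemma doubleton_eq_Inl_image_iff: "{Inl u, Inl v} = Inl ` e \<longleftrightarrow> {u, v} = e"
  using inj_image_eq_iff[OF inj_Inl, of "{u, v}" e] by simp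

lemma doubleton_eq_Inr_image_iff:
  "({Inr (u, x), Inr (v, y)} :: ('a + 'b \<times> 'c) set) = (\<lambda>z. Inr (w, z)) ` e \<longleftrightarrow>
     u = w \<and> v = w \<and> {x, y} = e"
proof
  assume copy: "({Inr (u, x), Inr (v, y)} :: ('a + 'b \<times> 'c) set) = (\<lambda>z. Inr (w, z)) ` e"
  then have "(Inr (u, x) :: 'a + 'b \<times> 'c) \<in> (\<lambda>z. Inr (w, z)) ` e"
    "(Inr (v, y) :: 'a + 'b \<times> 'c) \<in> (\<lambda>z. Inr (w, z)) ` e"
    unfolding copy[symmetric] by simp_all
  then have "u = w" "v = w" by auto
  moreover have "inj (\<lambda>z. (Inr (w, z) :: 'a + 'b \<times> 'c))" by (auto intro: injI)
  ultimately show "u = w \<and> v = w \<and> {x, y} = e"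
    using copy inj_image_eq_iff[of "\<lambda>z. Inr (w, z) :: 'a + 'b \<times> 'c" "{x, y}" e] by simp
qed auto

lemma insert_Inl_ne_Inr_image: "insert (Inl a) S \<noteq> (\<lambda>z. Inr (f z)) ` e"
  by auto

lemma insert_Inr_ne_Inl_image: "insert (Inr a) S \<noteq> Inl ` e"
  by auto

lemma adj_corona_Inl_Inl [simp]:
  "adj (corona_E VG EG VH EH) (Inl u) (Inl v) \<longleftrightarrow> adj EG u v"
  unfolding adj_def corona_E_iff
  by (simp add: doubleton_eq_Inl_image_iff insert_Inl_ne_Inr_image doubleton_eq_iff)

lemma adj_corona_Inl_Inr [simp]:
  "adj (corona_E VG EG VH EH) (Inl u) (Inr (v, x)) \<longleftrightarrow> u = v \<and> v \<in> VG \<and> x \<in> VH"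
  unfolding adj_def corona_E_iff
  by (auto simp: insert_Inr_ne_Inl_image insert_Inl_ne_Inr_image doubleton_eq_iff)

lemma adj_corona_Inr_Inl [simp]:
  "adj (corona_E VG EG VH EH) (Inr (v, x)) (Inl u) \<longleftrightarrow> u = v \<and> v \<in> VG \<and> x \<in> VH"
  by (simp add: adj_commute)

lemma adj_corona_Inr_Inr [simp]:
  "adj (corona_E VG EG VH EH) (Inr (u, x)) (Inr (v, y)) \<longleftrightarrow> u = v \<and> u \<in> VG \<and> adj EH x y"
  unfolding adj_def corona_E_iff
  by (auto simp: doubleton_eq_Inr_image_iff insert_Inr_ne_Inl_image doubleton_eq_iff)

lemma Inl_in_corona_V [simp]: "Inl v \<in> corona_V VG VH \<longleftrightarrow> v \<in> VG"
  by (auto simp: corona_V_def)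

lemma Inr_in_corona_V [simp]: "Inr (v, x) \<in> corona_V VG VH \<longleftrightarrow> v \<in> VG \<and> x \<in> VH"
  by (auto simp: corona_V_def)

lemma ball_corona_V: "(\<forall>w\<in>corona_V VG VH. P w) \<longleftrightarrow> (\<forall>v\<in>VG. P (Inl v) \<and> (\<forall>x\<in>VH. P (Inr (v, x))))"
  by (auto simp: corona_V_def)

lemma bex_corona_V: "(\<exists>w\<in>corona_V VG VH. P w) \<longleftrightarrow> (\<exists>v\<in>VG. P (Inl v) \<or> (\<exists>x\<in>VH. P (Inr (v, x))))"
  by (auto simp: corona_V_def)

lemma bex_corona_neighbour_Inr:
  assumes "v \<in> VG" and "x \<in> VH"
  shows "(\<exists>w\<in>corona_V VG VH. adj (corona_E VG EG VH EH) (Inr (v, x)) w \<and> P w) \<longleftrightarrow>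
    P (Inl v) \<or> (\<exists>y\<in>VH. adj EH x y \<and> P (Inr (v, y)))"
  using assms by (auto simp: bex_corona_V)

lemma bex2_corona_neighbour_Inr:
  assumes "v \<in> VG" and "x \<in> VH"
  shows "(\<exists>w\<in>corona_V VG VH. \<exists>w'\<in>corona_V VG VH. w \<noteq> w' \<and>
      adj (corona_E VG EG VH EH) (Inr (v, x)) w \<and> adj (corona_E VG EG VH EH) (Inr (v, x)) w' \<and>
      P w \<and> P w') \<longleftrightarrow>
    (P (Inl v) \<and> (\<exists>y\<in>VH. adj EH x y \<and> P (Inr (v, y)))) \<or>
    (\<exists>y\<in>VH. \<exists>z\<in>VH. y \<noteq> z \<and> adj EH x y \<and> adj EH x z \<and> P (Inr (v, y)) \<and> P (Inr (v, z)))"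
  using assms by (auto simp: bex_corona_V) blast

lemma finite_corona_V: "finite VG \<Longrightarrow> finite VH \<Longrightarrow> finite (corona_V VG VH)"
  by (simp add: corona_V_def)

lemma weight_corona_V:
  assumes "finite VG" and "finite VH"
  shows "weight (corona_V VG VH) F = (\<Sum>v\<in>VG. F (Inl v) + (\<Sum>x\<in>VH. F (Inr (v, x))))"
proof -
  have "weight (corona_V VG VH) F = sum F (Inl ` VG) + sum F (Inr ` (VG \<times> VH))"
    unfolding weight_def corona_V_def using assms by (intro sum.union_disjoint) auto
  also have "\<dots> = (\<Sum>v\<in>VG. F (Inl v)) + (\<Sum>v\<in>VG. \<Sum>x\<in>VH. F (Inr (v, x)))"
    by (simp add: sum.reindex sum.cartesian_product)
  finally show ?thesis by (simp add: sum.distrib)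
qed

section \<open>Labellings of a single copy of H\<close>

text \<open>A labelling F of the corona is described near a vertex v of G by k = F v and the labels
  g x = F (v, x) of the copy H_v. Every vertex of H_v has all its neighbours in H_v or at v, so
  the OIDRD conditions at the vertices of H_v depend on k and g only.\<close>

definition copy_OIDRD :: "'b set \<Rightarrow> 'b set set \<Rightarrow> nat \<Rightarrow> ('b \<Rightarrow> nat) \<Rightarrow> bool" where
  "copy_OIDRD VH EH k g \<longleftrightarrow>
     g ` VH \<subseteq> {0, 1, 2, 3} \<and> independent EH {x \<in> VH. g x = 0} \<and>
     (\<forall>x\<in>VH. g x = 0 \<longrightarrow> k \<noteq> 0 \<and>
        (k = 3 \<or> (\<exists>y\<in>VH. adj EH x y \<and> g y = 3) \<or> (k = 2 \<and> (\<exists>y\<in>VH. adj EH x y \<and> g y = 2)) \<or>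
         (\<exists>y\<in>VH. \<exists>z\<in>VH. y \<noteq> z \<and> adj EH x y \<and> adj EH x z \<and> g y = 2 \<and> g z = 2))) \<and>
     (\<forall>x\<in>VH. g x = 1 \<longrightarrow> 2 \<le> k \<or> (\<exists>y\<in>VH. adj EH x y \<and> 2 \<le> g y))"

text \<open>The centre v may also be dominated from G; the optimal copies constructed below dominate it
  from H_v alone, which is what makes every admissible labelling of G extendable.\<close>

definition centre_dominated :: "'b set \<Rightarrow> nat \<Rightarrow> ('b \<Rightarrow> nat) \<Rightarrow> bool" where
  "centre_dominated VH k g \<longleftrightarrow>
     (k = 0 \<longrightarrow> (\<exists>y\<in>VH. g y = 3) \<or> (\<exists>y\<in>VH. \<exists>z\<in>VH. y \<noteq> z \<and> g y = 2 \<and> g z = 2)) \<and>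
     (k = 1 \<longrightarrow> (\<exists>y\<in>VH. 2 \<le> g y))"

lemma copy_OIDRD_of_OIDRD_corona:
  assumes F: "OIDRD (corona_V VG VH) (corona_E VG EG VH EH) F" and v: "v \<in> VG"
  shows "copy_OIDRD VH EH (F (Inl v)) (\<lambda>x. F (Inr (v, x)))"
proof -
  note label = OIDRD_D(1)[OF F] and zero = OIDRD_D(2)[OF F] and one = OIDRD_D(3)[OF F]
    and indep = OIDRD_D(4)[OF F]
  show ?thesis
    unfolding copy_OIDRD_def
  proof (intro conjI ballI impI)
    show "(\<lambda>x. F (Inr (v, x))) ` VH \<subseteq> {0, 1, 2, 3}"
      using v by (intro image_subsetI label) simp
    show "independent EH {x \<in> VH. F (Inr (v, x)) = 0}"
      unfolding independent_def
    proof (intro ballI)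
      fix x y assume "x \<in> {x \<in> VH. F (Inr (v, x)) = 0}" "y \<in> {x \<in> VH. F (Inr (v, x)) = 0}"
      then show "\<not> adj EH x y"
        using indep[of "Inr (v, x)" "Inr (v, y)"] v by simp
    qed
    fix x assume x: "x \<in> VH"
    {
      assume x0: "F (Inr (v, x)) = 0"
      show "F (Inl v) \<noteq> 0"
        using indep[of "Inl v" "Inr (v, x)"] v x x0 by auto
      show "F (Inl v) = 3 \<or> (\<exists>y\<in>VH. adj EH x y \<and> F (Inr (v, y)) = 3) \<or>
          (F (Inl v) = 2 \<and> (\<exists>y\<in>VH. adj EH x y \<and> F (Inr (v, y)) = 2)) \<or>
          (\<exists>y\<in>VH. \<exists>z\<in>VH. y \<noteq> z \<and> adj EH x y \<and> adj EH x z \<and> F (Inr (v, y)) = 2 \<and> F (Inr (v, z)) = 2)"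
        using zero[of "Inr (v, x)"] v x x0
        by (simp add: bex_corona_neighbour_Inr bex2_corona_neighbour_Inr)
    next
      assume "F (Inr (v, x)) = 1"
      then show "2 \<le> F (Inl v) \<or> (\<exists>y\<in>VH. adj EH x y \<and> 2 \<le> F (Inr (v, y)))"
        using one[of "Inr (v, x)"] v x by (simp add: bex_corona_neighbour_Inr)
    }
  qed
qed

lemma DRD_corona_at_copy:
  assumes "v \<in> VG" and "x \<in> VH" and copy: "copy_OIDRD VH EH (F (Inl v)) (\<lambda>x. F (Inr (v, x)))"
  shows "F (Inr (v, x)) = 0 \<Longrightarrow>
      (\<exists>u\<in>corona_V VG VH. adj (corona_E VG EG VH EH) (Inr (v, x)) u \<and> F u = 3) \<or>
      (\<exists>u\<in>corona_V VG VH. \<exists>u'\<in>corona_V VG VH. u \<noteq> u' \<and>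
         adj (corona_E VG EG VH EH) (Inr (v, x)) u \<and> adj (corona_E VG EG VH EH) (Inr (v, x)) u' \<and>
         F u = 2 \<and> F u' = 2)"
    and "F (Inr (v, x)) = 1 \<Longrightarrow>
      \<exists>u\<in>corona_V VG VH. adj (corona_E VG EG VH EH) (Inr (v, x)) u \<and> 2 \<le> F u"
  using assms unfolding copy_OIDRD_def
  by (simp_all add: bex_corona_neighbour_Inr bex2_corona_neighbour_Inr)

lemma DRD_corona_at_centre:
  assumes v: "v \<in> VG" and centre: "centre_dominated VH (F (Inl v)) (\<lambda>x. F (Inr (v, x)))"
  shows "F (Inl v) = 0 \<Longrightarrow>
      (\<exists>u\<in>corona_V VG VH. adj (corona_E VG EG VH EH) (Inl v) u \<and> F u = 3) \<or>
      (\<exists>u\<in>corona_V VG VH. \<exists>u'\<in>corona_V VG VH. u \<noteq> u' \<and>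
         adj (corona_E VG EG VH EH) (Inl v) u \<and> adj (corona_E VG EG VH EH) (Inl v) u' \<and>
         F u = 2 \<and> F u' = 2)"
    and "F (Inl v) = 1 \<Longrightarrow>
      \<exists>u\<in>corona_V VG VH. adj (corona_E VG EG VH EH) (Inl v) u \<and> 2 \<le> F u"
proof -
  assume "F (Inl v) = 0"
  then consider y where "y \<in> VH" "F (Inr (v, y)) = 3"
    | y z where "y \<in> VH" "z \<in> VH" "y \<noteq> z" "F (Inr (v, y)) = 2" "F (Inr (v, z)) = 2"
    using centre unfolding centre_dominated_def by auto
  then show "(\<exists>u\<in>corona_V VG VH. adj (corona_E VG EG VH EH) (Inl v) u \<and> F u = 3) \<or>
      (\<exists>u\<in>corona_V VG VH. \<exists>u'\<in>corona_V VG VH. u \<noteq> u' \<and>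
         adj (corona_E VG EG VH EH) (Inl v) u \<and> adj (corona_E VG EG VH EH) (Inl v) u' \<and>
         F u = 2 \<and> F u' = 2)"
  proof cases
    case (1 y)
    then show ?thesis using v by (intro disjI1 bexI[of _ "Inr (v, y)"]) simp_all
  next
    case (2 y z)
    then show ?thesis
      using v by (intro disjI2 bexI[of _ "Inr (v, y)"] bexI[of _ "Inr (v, z)"]) simp_all
  qed
next
  assume "F (Inl v) = 1"
  then obtain y where "y \<in> VH" "2 \<le> F (Inr (v, y))"
    using centre unfolding centre_dominated_def by auto
  then show "\<exists>u\<in>corona_V VG VH. adj (corona_E VG EG VH EH) (Inl v) u \<and> 2 \<le> F u"
    using v by (intro bexI[of _ "Inr (v, y)"]) simp_all
qed

lemma OIDRD_corona_of_copies:
  assumes labels: "(\<lambda>v. F (Inl v)) ` VG \<subseteq> {0, 1, 2, 3}"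
    and indep_G: "independent EG {v \<in> VG. F (Inl v) = 0}"
    and copy: "\<And>v. v \<in> VG \<Longrightarrow> copy_OIDRD VH EH (F (Inl v)) (\<lambda>x. F (Inr (v, x)))"
    and centre: "\<And>v. v \<in> VG \<Longrightarrow> centre_dominated VH (F (Inl v)) (\<lambda>x. F (Inr (v, x)))"
  shows "OIDRD (corona_V VG VH) (corona_E VG EG VH EH) F"
  unfolding OIDRD_def DRD_def
proof (intro conjI)
  let ?CV = "corona_V VG VH" and ?CE = "corona_E VG EG VH EH"
  show "F ` ?CV \<subseteq> {0, 1, 2, 3}"
    unfolding image_subset_iff ball_corona_V
    using labels copy unfolding copy_OIDRD_def by (auto simp: image_subset_iff)
  show "\<forall>w\<in>?CV. F w = 0 \<longrightarrow> (\<exists>u\<in>?CV. adj ?CE w u \<and> F u = 3) \<or>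
      (\<exists>u\<in>?CV. \<exists>u'\<in>?CV. u \<noteq> u' \<and> adj ?CE w u \<and> adj ?CE w u' \<and> F u = 2 \<and> F u' = 2)"
    and "\<forall>w\<in>?CV. F w = 1 \<longrightarrow> (\<exists>u\<in>?CV. adj ?CE w u \<and> 2 \<le> F u)"
    unfolding ball_corona_V
    by (intro ballI conjI impI;
        rule DRD_corona_at_centre[OF _ centre] DRD_corona_at_copy[OF _ _ copy]; assumption)+
  have "\<not> adj ?CE (Inl v) (Inr (v, x))"
    if "v \<in> VG" "x \<in> VH" "F (Inl v) = 0" "F (Inr (v, x)) = 0" for v x
    using copy[OF \<open>v \<in> VG\<close>] that unfolding copy_OIDRD_def by auto
  moreover have "\<not> adj ?CE (Inr (v, x)) (Inr (v, y))"
    if "v \<in> VG" "x \<in> VH" "y \<in> VH" "F (Inr (v, x)) = 0" "F (Inr (v, y)) = 0" for v x y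
    using copy[OF \<open>v \<in> VG\<close>] that unfolding copy_OIDRD_def independent_def by auto
  ultimately show "independent ?CE {w \<in> ?CV. F w = 0}"
    using indep_G unfolding independent_def corona_V_def by (auto simp: adj_commute)
qed

lemma OIDRD_corona_centres:
  assumes "OIDRD (corona_V VG VH) (corona_E VG EG VH EH) F"
  shows "(\<lambda>v. F (Inl v)) ` VG \<subseteq> {0, 1, 2, 3}" and "independent EG {v \<in> VG. F (Inl v) = 0}"
proof -
  show "(\<lambda>v. F (Inl v)) ` VG \<subseteq> {0, 1, 2, 3}"
    by (intro image_subsetI OIDRD_D(1)[OF assms]) simp
  show "independent EG {v \<in> VG. F (Inl v) = 0}"
    unfolding independent_def
  proof (intro ballI)
    fix u v assume "u \<in> {v \<in> VG. F (Inl v) = 0}" "v \<in> {v \<in> VG. F (Inl v) = 0}"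
    then show "\<not> adj EG u v" using OIDRD_D(4)[OF assms, of "Inl u" "Inl v"] by simp
  qed
qed

lemma copy_OIDRD_0_iff:
  "copy_OIDRD VH EH 0 g \<longleftrightarrow>
     g ` VH \<subseteq> {1, 2, 3} \<and> (\<forall>x\<in>VH. g x = 1 \<longrightarrow> (\<exists>y\<in>VH. adj EH x y \<and> 2 \<le> g y))"
proof -
  have "independent EH {x \<in> VH. g x = 0}" if "g ` VH \<subseteq> {1, 2, 3}"
    using that unfolding independent_def by auto
  then show ?thesis
    unfolding copy_OIDRD_def by (fastforce simp: image_subset_iff)
qed

lemma copy_OIDRD_1_iff: "copy_OIDRD VH EH 1 g \<longleftrightarrow> OIDRD VH EH g"
  unfolding copy_OIDRD_def OIDRD_def DRD_def by auto

lemma copy_OIDRD_2_iff: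
  "copy_OIDRD VH EH 2 g \<longleftrightarrow>
     g ` VH \<subseteq> {0, 1, 2, 3} \<and> independent EH {x \<in> VH. g x = 0} \<and>
     (\<forall>x\<in>VH. g x = 0 \<longrightarrow> (\<exists>y\<in>VH. adj EH x y \<and> 2 \<le> g y))"
proof (cases "g ` VH \<subseteq> {0, 1, 2, 3}")
  case True
  have "(\<exists>y\<in>VH. adj EH x y \<and> g y = 3) \<or> (\<exists>y\<in>VH. adj EH x y \<and> g y = 2) \<or>
      (\<exists>y\<in>VH. \<exists>z\<in>VH. y \<noteq> z \<and> adj EH x y \<and> adj EH x z \<and> g y = 2 \<and> g z = 2) \<longleftrightarrow>
    (\<exists>y\<in>VH. adj EH x y \<and> 2 \<le> g y)" for x
  proof
    assume "\<exists>y\<in>VH. adj EH x y \<and> 2 \<le> g y"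
    then obtain y where "y \<in> VH" "adj EH x y" "2 \<le> g y" by blast
    moreover have "g y = 2 \<or> g y = 3" using True \<open>y \<in> VH\<close> \<open>2 \<le> g y\<close> by auto
    ultimately show "(\<exists>y\<in>VH. adj EH x y \<and> g y = 3) \<or> (\<exists>y\<in>VH. adj EH x y \<and> g y = 2) \<or>
      (\<exists>y\<in>VH. \<exists>z\<in>VH. y \<noteq> z \<and> adj EH x y \<and> adj EH x z \<and> g y = 2 \<and> g z = 2)" by blast
  qed force
  with True show ?thesis by (simp add: copy_OIDRD_def)
qed (simp add: copy_OIDRD_def)

lemma copy_OIDRD_3_iff:
  "copy_OIDRD VH EH 3 g \<longleftrightarrow> g ` VH \<subseteq> {0, 1, 2, 3} \<and> independent EH {x \<in> VH. g x = 0}"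
  unfolding copy_OIDRD_def by auto

section \<open>The cheapest copy\<close>

definition copy_cost :: "'b set \<Rightarrow> 'b set set \<Rightarrow> nat \<Rightarrow> nat" where
  "copy_cost VH EH k =
     (if k = 0 then card VH + domination_number VH EH
      else if k = 1 then gamma_oidR VH EH + 1
      else if k = 2 then gamma_oiR VH EH + 2
      else vertex_cover_number VH EH + 3)"

lemma copy_cost_le:
  assumes H: "sgraph VH EH" and copy: "copy_OIDRD VH EH k g"
  shows "copy_cost VH EH k \<le> k + sum g VH"
proof -
  have fin: "finite VH" using H by (simp add: sgraph_def)
  consider "k = 0" | "k = 1" | "k = 2" | "3 \<le> k" by linarith
  then show ?thesis
  proof cases
    case 1
    with copy have "g ` VH \<subseteq> {1, 2, 3}" "\<forall>x\<in>VH. g x = 1 \<longrightarrow> (\<exists>y\<in>VH. adj EH x y \<and> 2 \<le> g y)"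
      by (simp_all add: copy_OIDRD_0_iff)
    then have "card VH + domination_number VH EH \<le> sum g VH"
      by (intro card_add_domination_number_le_sum[OF fin]) auto
    then show ?thesis using 1 by (simp add: copy_cost_def)
  next
    case 2
    have "OIDRD VH EH g" using copy unfolding 2 copy_OIDRD_1_iff .
    then have "gamma_oidR VH EH \<le> weight VH g" by (rule gamma_oidR_le[OF fin])
    then show ?thesis using 2 by (simp add: copy_cost_def weight_def)
  next
    case 3
    with copy have "independent EH {x \<in> VH. g x = 0}"
      "\<forall>x\<in>VH. g x = 0 \<longrightarrow> (\<exists>y\<in>VH. adj EH x y \<and> 2 \<le> g y)"
      by (simp_all add: copy_OIDRD_2_iff)
    then have "gamma_oiR VH EH \<le> sum g VH"
      by (rule gamma_oiR_le_sum[OF fin])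
    then show ?thesis using 3 by (simp add: copy_cost_def)
  next
    case 4
    have "vertex_cover_number VH EH \<le> sum g VH"
      using copy unfolding copy_OIDRD_def by (intro vertex_cover_number_le_sum[OF H]) simp
    then show ?thesis using 4 by (simp add: copy_cost_def)
  qed
qed

lemma copy_cost_attained_0:
  assumes H: "sgraph VH EH" and "VH \<noteq> {}" and "\<forall>x\<in>VH. degree VH EH x + 2 \<le> card VH"
  shows "\<exists>g. copy_OIDRD VH EH 0 g \<and> centre_dominated VH 0 g \<and>
    sum g VH = card VH + domination_number VH EH"
proof -
  have fin: "finite VH" using H by (simp add: sgraph_def)
  obtain D where D: "dominating VH EH D" "card D = domination_number VH EH"
    using domination_number_attained[OF fin] by blast
  have DV: "D \<subseteq> VH" using D(1) by (simp add: dominating_def)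
  define g where "g x = (1::nat) + of_bool (x \<in> D)" for x
  have "copy_OIDRD VH EH 0 g"
    unfolding copy_OIDRD_0_iff
  proof (intro conjI ballI impI)
    show "g ` VH \<subseteq> {1, 2, 3}" by (auto simp: g_def)
    fix x assume "x \<in> VH" "g x = 1"
    then have "x \<in> VH - D" by (simp add: g_def)
    then obtain d where "d \<in> D" "adj EH d x" using D(1) unfolding dominating_def by blast
    then show "\<exists>y\<in>VH. adj EH x y \<and> 2 \<le> g y" using DV by (auto simp: g_def adj_commute)
  qed
  moreover obtain a b where "a \<in> D" "b \<in> D" "a \<noteq> b"
    using dominating_ex_two[OF fin assms(2,3) D(1)] by blast
  then have "centre_dominated VH 0 g"
    using DV unfolding centre_dominated_def g_def by auto
  moreover have "sum g VH = card VH + card (VH \<inter> {x. x \<in> D})"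
    unfolding g_def sum.distrib using fin by simp
  then have "sum g VH = card VH + domination_number VH EH"
    using DV D(2) by (simp add: Int_absorb1)
  ultimately show ?thesis by blast
qed

lemma copy_cost_attained_3:
  assumes H: "sgraph VH EH"
  shows "\<exists>g. copy_OIDRD VH EH 3 g \<and> sum g VH = vertex_cover_number VH EH"
proof -
  have fin: "finite VH" using H by (simp add: sgraph_def)
  obtain C where C: "vertex_cover VH EH C" "card C = vertex_cover_number VH EH"
    using vertex_cover_number_attained[OF H] by blast
  then have CV: "C \<subseteq> VH" and indep: "independent EH (VH - C)"
    by (simp_all add: vertex_cover_iff_independent_Diff[OF H])
  define g where "g x = (of_bool (x \<in> C) :: nat)" for x
  have "{x \<in> VH. g x = 0} = VH - C" by (auto simp: g_def)
  then have "copy_OIDRD VH EH 3 g"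
    unfolding copy_OIDRD_3_iff using indep by (auto simp: g_def)
  moreover have "sum g VH = vertex_cover_number VH EH"
    unfolding g_def using fin CV C(2) by (simp add: Int_absorb1)
  ultimately show ?thesis by blast
qed

lemma copy_cost_attained:
  assumes H: "sgraph VH EH" and "VH \<noteq> {}" and "\<forall>x\<in>VH. degree VH EH x + 2 \<le> card VH"
    and "k \<le> 3"
  shows "\<exists>g. copy_OIDRD VH EH k g \<and> centre_dominated VH k g \<and> k + sum g VH = copy_cost VH EH k"
proof -
  have fin: "finite VH" using H by (simp add: sgraph_def)
  consider "k = 0" | "k = 1" | "k = 2" | "k = 3" using \<open>k \<le> 3\<close> by linarith
  then show ?thesis
  proof cases
    case 1
    then show ?thesis
      using copy_cost_attained_0[OF assms(1-3)] by (simp add: copy_cost_def)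
  next
    case 2
    obtain g where g: "OIDRD VH EH g" "weight VH g = gamma_oidR VH EH"
      using gamma_oidR_attained[OF fin] by blast
    have "copy_OIDRD VH EH 1 g" unfolding copy_OIDRD_1_iff by (rule g(1))
    moreover have "centre_dominated VH 1 g"
      using OIDRD_ex_label_ge_2[OF g(1) assms(2)] by (simp add: centre_dominated_def)
    moreover have "1 + sum g VH = copy_cost VH EH 1"
      using g(2) by (simp add: copy_cost_def weight_def)
    ultimately show ?thesis using 2 by blast
  next
    case 3
    obtain g where g: "OIRD VH EH g" "weight VH g = gamma_oiR VH EH"
      using gamma_oiR_attained[OF fin] by blast
    then have "copy_OIDRD VH EH 2 g"
      unfolding copy_OIDRD_2_iff OIRD_def RD_def by fastforce
    then show ?thesis
      using 3 g(2) by (auto simp: centre_dominated_def copy_cost_def weight_def)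
  next
    case 4
    then show ?thesis
      using copy_cost_attained_3[OF H] by (simp add: centre_dominated_def copy_cost_def)
  qed
qed

lemma sum_copy_cost:
  assumes "finite VG" and "f ` VG \<subseteq> {0, 1, 2, 3}"
  shows "(\<Sum>v\<in>VG. copy_cost VH EH (f v)) =
    card {v \<in> VG. f v = 0} * (card VH + domination_number VH EH)
    + card {v \<in> VG. f v = 1} * (gamma_oidR VH EH + 1)
    + card {v \<in> VG. f v = 2} * (gamma_oiR VH EH + 2)
    + card {v \<in> VG. f v = 3} * (vertex_cover_number VH EH + 3)"
proof -
  have "(\<Sum>v\<in>VG. copy_cost VH EH (f v)) =
      (\<Sum>k\<in>{0, 1, 2, 3}. \<Sum>v\<in>{v \<in> VG. f v = k}. copy_cost VH EH (f v))"
    by (rule sum.group[OF assms(1) _ assms(2), symmetric]) simp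
  also have "\<dots> = (\<Sum>k\<in>{0, 1, 2, 3}. card {v \<in> VG. f v = k} * copy_cost VH EH k)"
    by (intro sum.cong refl) simp
  also have "\<dots> = card {v \<in> VG. f v = 0} * (card VH + domination_number VH EH)
    + card {v \<in> VG. f v = 1} * (gamma_oidR VH EH + 1)
    + card {v \<in> VG. f v = 2} * (gamma_oiR VH EH + 2)
    + card {v \<in> VG. f v = 3} * (vertex_cover_number VH EH + 3)"
    by (simp add: copy_cost_def)
  finally show ?thesis .
qed

lemma gamma_oidR_corona_le:
  assumes "finite VG" and H: "sgraph VH EH" "VH \<noteq> {}" "\<forall>x\<in>VH. degree VH EH x + 2 \<le> card VH"
    and fG: "fG ` VG \<subseteq> {0, 1, 2, 3}" "independent EG {v \<in> VG. fG v = 0}"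
  shows "gamma_oidR (corona_V VG VH) (corona_E VG EG VH EH) \<le> (\<Sum>v\<in>VG. copy_cost VH EH (fG v))"
proof -
  have fin: "finite VH" using H(1) by (simp add: sgraph_def)
  have "\<forall>v\<in>VG. \<exists>h. copy_OIDRD VH EH (fG v) h \<and> centre_dominated VH (fG v) h \<and>
      fG v + sum h VH = copy_cost VH EH (fG v)"
    using fG(1) by (intro ballI copy_cost_attained[OF H]) auto
  then obtain g where g: "\<forall>v\<in>VG. copy_OIDRD VH EH (fG v) (g v) \<and> centre_dominated VH (fG v) (g v) \<and>
      fG v + sum (g v) VH = copy_cost VH EH (fG v)"
    by (rule bchoice[THEN exE])
  let ?F = "case_sum fG (case_prod g)"
  have "OIDRD (corona_V VG VH) (corona_E VG EG VH EH) ?F"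
    using fG g by (intro OIDRD_corona_of_copies) simp_all
  then have "gamma_oidR (corona_V VG VH) (corona_E VG EG VH EH) \<le> weight (corona_V VG VH) ?F"
    by (rule gamma_oidR_le[OF finite_corona_V[OF assms(1) fin]])
  also have "\<dots> = (\<Sum>v\<in>VG. copy_cost VH EH (fG v))"
    unfolding weight_corona_V[OF assms(1) fin] using g by (intro sum.cong) auto
  finally show ?thesis .
qed

lemma gamma_oidR_corona_ge:
  assumes G: "sgraph VG EG" and H: "sgraph VH EH"
  shows "\<exists>fG. fG ` VG \<subseteq> {0, 1, 2, 3} \<and> independent EG {v \<in> VG. fG v = 0} \<and>
    (\<Sum>v\<in>VG. copy_cost VH EH (fG v)) \<le> gamma_oidR (corona_V VG VH) (corona_E VG EG VH EH)"
proof -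
  have finG: "finite VG" and finH: "finite VH" using G H by (simp_all add: sgraph_def)
  obtain F where F: "OIDRD (corona_V VG VH) (corona_E VG EG VH EH) F"
    "weight (corona_V VG VH) F = gamma_oidR (corona_V VG VH) (corona_E VG EG VH EH)"
    using gamma_oidR_attained[OF finite_corona_V[OF finG finH]] by blast
  have "(\<Sum>v\<in>VG. copy_cost VH EH (F (Inl v))) \<le> (\<Sum>v\<in>VG. F (Inl v) + (\<Sum>x\<in>VH. F (Inr (v, x))))"
    by (intro sum_mono copy_cost_le[OF H] copy_OIDRD_of_OIDRD_corona[OF F(1)])
  also have "\<dots> = gamma_oidR (corona_V VG VH) (corona_E VG EG VH EH)"
    using F(2) by (simp add: weight_corona_V[OF finG finH])
  finally show ?thesis
    using OIDRD_corona_centres[OF F(1)] by blast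
qed

lemma gamma_oidR_corona:
  assumes G: "sgraph VG EG"
    and H: "sgraph VH EH" "VH \<noteq> {}" "\<forall>x\<in>VH. degree VH EH x + 2 \<le> card VH"
  shows "gamma_oidR (corona_V VG VH) (corona_E VG EG VH EH) =
    Min ((\<lambda>f. \<Sum>v\<in>VG. copy_cost VH EH (f v)) `
      {f. f ` VG \<subseteq> {0, 1, 2, 3} \<and> independent EG {v \<in> VG. f v = 0}})"
    (is "?\<gamma> = Min (?cost ` ?adm)")
proof (rule Min_eqI[symmetric])
  have finG: "finite VG" using G by (simp add: sgraph_def)
  show lower: "?\<gamma> \<le> c" if "c \<in> ?cost ` ?adm" for c
    using that gamma_oidR_corona_le[OF finG H] by auto
  obtain f0 where "f0 \<in> ?adm" and "?cost f0 \<le> ?\<gamma>"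
    using gamma_oidR_corona_ge[OF G H(1)] by auto
  moreover from this have "?\<gamma> \<le> ?cost f0" by (intro lower) simp
  ultimately have "?\<gamma> = ?cost f0" by simp
  then show "?\<gamma> \<in> ?cost ` ?adm" using \<open>f0 \<in> ?adm\<close> by (rule image_eqI)
  let ?B = "copy_cost VH EH 0 + copy_cost VH EH 1 + copy_cost VH EH 2 + copy_cost VH EH 3"
  have "?cost ` ?adm \<subseteq> {..card VG * ?B}"
  proof (rule image_subsetI)
    fix f :: "'a \<Rightarrow> nat"
    have "?cost f \<le> (\<Sum>v\<in>VG. ?B)" by (intro sum_mono) (simp add: copy_cost_def)
    then show "?cost f \<in> {..card VG * ?B}" by simp
  qed
  then show "finite (?cost ` ?adm)" by (rule finite_subset) simp
qed

theorem theorem6: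
  fixes VG :: "'a set" and EG :: "'a set set" and VH :: "'b set" and EH :: "'b set set"
  assumes "sgraph VG EG"
    and "sgraph VH EH"
    and "VH \<noteq> {}"
    and "\<forall>x\<in>VH. degree VH EH x + 2 \<le> card VH"
  shows "gamma_oidR (corona_V VG VH) (corona_E VG EG VH EH) =
    Min {card {v \<in> VG. f v = 0} * (card VH + domination_number VH EH)
         + card {v \<in> VG. f v = 1} * (gamma_oidR VH EH + 1)
         + card {v \<in> VG. f v = 2} * (gamma_oiR VH EH + 2)
         + card {v \<in> VG. f v = 3} * (vertex_cover_number VH EH + 3)
       | f. (f :: 'a \<Rightarrow> nat) ` VG \<subseteq> {0, 1, 2, 3} \<and> independent EG {v \<in> VG. f v = 0}}"
proof -
  have "finite VG" using assms(1) by (simp add: sgraph_def)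
  then show ?thesis
    unfolding gamma_oidR_corona[OF assms] setcompr_eq_image
    by (intro arg_cong[where f = Min] image_cong refl) (simp add: sum_copy_cost)
qed

end
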